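(* Let $d\geqslant 2$. Every $(d-1)$-neighborly family $F\subseteq S^d$ of maximum possible size is a partition, i.e., $\sum_{x\in F}2^{j(x)}=2^d$, where $j(x)$ is the number of jokers in $x$.
   Context: Let $S=\{0,1,\ast\}$ and let $S^d$ be the set of strings of length $d$ over $S$; the symbol $\ast$ is called a joker, and $j(x)$ denotes the number of jokers in $x\in S^d$. For $x,y\in S^d$, $d(x,y)$ is the number of positions $i\in[d]$ such that one of $x_i,y_i$ equals $0$ and the other equals $1$. A family $F\subseteq S^d$ is $k$-neighborly if $1\leqslant d(x,y)\leqslant k$ for all distinct $x,y\in F$. A $k$-neighborly family $F$ is called a partition if $\sum_{x\in F}2^{j(x)}=2^d$. "Maximum possible size" means that no $(d-1)$-neighborly family in $S^d$ has more elements. *)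

theory Defs
  imports Main
begin

datatype sym = Zero | One | Joker

definition words :: "nat \<Rightarrow> sym list set" where
  "words d = {x. length x = d}"

definition jokers :: "sym list \<Rightarrow> nat" where
  "jokers x = length (filter (\<lambda>s. s = Joker) x)"

definition dist :: "sym list \<Rightarrow> sym list \<Rightarrow> nat" where
  "dist x y = card {i. i < length x \<and> i < length y \<and>
      ((x ! i = Zero \<and> y ! i = One) \<or> (x ! i = One \<and> y ! i = Zero))}"

definition neighborly :: "nat \<Rightarrow> nat \<Rightarrow> sym list set \<Rightarrow> bool" where
  "neighborly d k F \<longleftrightarrow> F \<subseteq> words d \<and>
     (\<forall>x\<in>F. \<forall>y\<in>F. x \<noteq> y \<longrightarrow> 1 \<le> dist x y \<and> dist x y \<le> k)"

definition is_partition :: "nat \<Rightarrow> sym list set \<Rightarrow> bool" where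
  "is_partition d F \<longleftrightarrow> (\<Sum>x\<in>F. (2::nat) ^ jokers x) = 2 ^ d"

end

(*
  Read a word x as the subcube of {0,1}^d obtained by filling its jokers in all possible
  ways; it has 2^j(x) points, and d(x,y) >= 1 says exactly that the subcubes of x and y are
  disjoint, so the volume sum of 2^j(x) over F is at most 2^d. The bound d(x,y) <= d - 1 forbids
  a binary word together with its complement, so F has at most 2^(d-1) binary words. Every other
  word has volume at least 2, hence 2|F| <= 2^(d-1) + volume. The family of all binary words
  starting with 0 together with all words 1*w (w binary) is (d-1)-neighborly of size
  3 * 2^(d-2); a family of maximum size therefore has volume 2^d.
*)
theory Submission
  imports Defs
begin

lemma UNIV_sym: "(UNIV :: sym set) = {Zero, One, Joker}"
  by (metis UNIV_eq_I insertCI sym.exhaust)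

instance sym :: finite
  by standard (simp add: UNIV_sym)

lemma not_Joker_iff: "t \<noteq> Joker \<longleftrightarrow> t = Zero \<or> t = One"
  by (cases t) auto

lemma finite_words: "finite (words d)"
  using finite_lists_length_eq[of "UNIV :: sym set" d] by (simp add: words_def)

definition clash :: "sym \<Rightarrow> sym \<Rightarrow> bool" where
  "clash a b \<longleftrightarrow> (a = Zero \<and> b = One) \<or> (a = One \<and> b = Zero)"

lemma dist_eq_length_filter: "dist x y = length (filter (\<lambda>(a, b). clash a b) (zip x y))"
  unfolding dist_def length_filter_conv_card
  by (rule arg_cong[where f = card]) (auto simp: clash_def)

lemma dist_Nil [simp]: "dist [] y = 0" "dist x [] = 0"
  by (simp_all add: dist_eq_length_filter)

lemma dist_Cons_Cons [simp]: "dist (a # x) (b # y) = of_bool (clash a b) + dist x y"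
  by (simp add: dist_eq_length_filter)

lemma dist_self [simp]: "dist x x = 0"
  by (induction x) (simp_all add: clash_def)

lemma dist_commute: "dist x y = dist y x"
  unfolding dist_def by (rule arg_cong[where f = card]) auto

lemma dist_le_length: "dist x y \<le> length x"
  unfolding dist_eq_length_filter by (rule order.trans[OF length_filter_le]) simp

lemma jokers_Nil [simp]: "jokers [] = 0"
  and jokers_Cons [simp]: "jokers (a # x) = of_bool (a = Joker) + jokers x"
  by (simp_all add: jokers_def)

lemma jokers_eq_0_iff: "jokers x = 0 \<longleftrightarrow> Joker \<notin> set x"
  by (auto simp: jokers_def filter_empty_conv)

definition binary_words :: "nat \<Rightarrow> sym list set" where
  "binary_words n = {v. set v \<subseteq> {Zero, One} \<and> length v = n}"

lemma card_binary_words: "card (binary_words n) = 2 ^ n"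
  by (simp add: binary_words_def card_lists_length_eq numeral_2_eq_2)

lemma finite_binary_words: "finite (binary_words n)"
  by (simp add: binary_words_def finite_lists_length_eq)

lemma binary_iff_no_Joker: "set v \<subseteq> {Zero, One} \<longleftrightarrow> Joker \<notin> set v"
  using not_Joker_iff by blast

definition covers :: "sym \<Rightarrow> sym \<Rightarrow> bool" where
  "covers a t \<longleftrightarrow> t \<noteq> Joker \<and> (a = Joker \<or> t = a)"

definition subcube :: "sym list \<Rightarrow> sym list set" where
  "subcube x = {v. list_all2 covers x v}"

lemma subcube_Nil: "subcube [] = {[]}"
  by (simp add: subcube_def)

lemma subcube_Cons: "subcube (a # x) = (\<lambda>(t, v). t # v) ` ({t. covers a t} \<times> subcube x)"
  by (auto simp: subcube_def list_all2_Cons1)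

lemma card_covers: "card {t. covers a t} = 2 ^ of_bool (a = Joker)"
proof -
  have "{t. covers a t} = (if a = Joker then {Zero, One} else {a})"
    by (cases a) (auto simp: covers_def not_Joker_iff)
  then show ?thesis by simp
qed

lemma card_subcube: "card (subcube x) = 2 ^ jokers x"
proof (induction x)
  case Nil
  then show ?case by (simp add: subcube_Nil)
next
  case (Cons a x)
  have "inj (\<lambda>(t :: sym, v). t # v)"
    by (auto intro: injI)
  then have "card (subcube (a # x)) = card {t. covers a t} * card (subcube x)"
    by (simp add: subcube_Cons card_image inj_on_subset card_cartesian_product)
  then show ?case
    using Cons by (simp add: card_covers power_add)
qed

lemma subcube_subset_binary_words: "subcube x \<subseteq> binary_words (length x)"
proof
  fix v
  assume "v \<in> subcube x"
  then have "list_all2 covers x v"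
    by (simp add: subcube_def)
  then show "v \<in> binary_words (length x)"
    by (induction rule: list_all2_induct) (auto simp: binary_words_def covers_def not_Joker_iff)
qed

lemma dist_eq_0_if_common_point:
  "v \<in> subcube x \<Longrightarrow> v \<in> subcube y \<Longrightarrow> dist x y = 0"
  unfolding subcube_def mem_Collect_eq
proof (induction x v arbitrary: y rule: list_all2_induct)
  case Nil
  then show ?case by simp
next
  case (Cons a x t v)
  then obtain b y' where "y = b # y'" "covers b t" "list_all2 covers y' v"
    by (auto simp: list_all2_Cons2)
  with Cons show ?case
    by (auto simp: covers_def clash_def)
qed

lemma finite_subcube: "finite (subcube x)"
  using finite_subset[OF subcube_subset_binary_words finite_binary_words] .

lemma sum_pow_jokers_le:
  assumes "neighborly d k F"
  shows "(\<Sum>x\<in>F. 2 ^ jokers x) \<le> (2::nat) ^ d"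
proof -
  have F: "F \<subseteq> words d" and separated: "\<And>x y. x \<in> F \<Longrightarrow> y \<in> F \<Longrightarrow> x \<noteq> y \<Longrightarrow> 1 \<le> dist x y"
    using assms by (simp_all add: neighborly_def)
  have "finite F"
    using finite_subset[OF F finite_words] .
  moreover have "subcube x \<inter> subcube y = {}" if "x \<in> F" "y \<in> F" "x \<noteq> y" for x y
    using separated[OF that] dist_eq_0_if_common_point by fastforce
  ultimately have "(\<Sum>x\<in>F. 2 ^ jokers x) = card (\<Union>x\<in>F. subcube x)"
    by (subst card_UN_disjoint) (auto simp: card_subcube finite_subcube)
  also have "\<dots> \<le> card (binary_words d)"
    using F subcube_subset_binary_words
    by (intro card_mono finite_binary_words) (fastforce simp: words_def)
  finally show ?thesis
    by (simp add: card_binary_words)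
qed

fun flip :: "sym \<Rightarrow> sym" where
  "flip Zero = One" | "flip One = Zero" | "flip Joker = Joker"

lemma flip_flip [simp]: "flip (flip a) = a"
  by (cases a) simp_all

lemma flip_eq_Joker_iff: "flip a = Joker \<longleftrightarrow> a = Joker"
  by (cases a) simp_all

lemma inj_flip: "inj flip"
  by (metis injI flip_flip)

lemma dist_map_flip: "Joker \<notin> set x \<Longrightarrow> dist x (map flip x) = length x"
proof (induction x)
  case (Cons a x)
  then show ?case by (cases a) (simp_all add: clash_def)
qed simp

lemma map_flip_binary_words: "map flip ` binary_words n \<subseteq> binary_words n"
  by (auto simp: binary_words_def binary_iff_no_Joker) (metis flip_eq_Joker_iff)

lemma card_binary_members_le:
  assumes "k < d" and "neighborly d k F"
  shows "2 * card {x\<in>F. jokers x = 0} \<le> 2 ^ d"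
proof -
  define P where "P = {x\<in>F. jokers x = 0}"
  have P: "P \<subseteq> binary_words d"
    using assms(2) by (auto simp: P_def neighborly_def words_def binary_words_def
        jokers_eq_0_iff binary_iff_no_Joker)
  have "map flip x \<notin> P" if "x \<in> P" for x
  proof
    assume "map flip x \<in> P"
    moreover have "dist x (map flip x) = d"
      using \<open>x \<in> P\<close> P by (auto simp: dist_map_flip binary_words_def binary_iff_no_Joker)
    moreover have "x \<noteq> map flip x"
      using \<open>dist x (map flip x) = d\<close> assms(1) by force
    ultimately show False
      using \<open>x \<in> P\<close> assms by (force simp: P_def neighborly_def)
  qed
  then have "P \<inter> map flip ` P = {}"
    by blast
  then have "card P + card (map flip ` P) = card (P \<union> map flip ` P)"
    using finite_subset[OF P finite_binary_words] by (simp add: card_Un_disjoint)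
  also have "\<dots> \<le> card (binary_words d)"
    using P map_flip_binary_words by (intro card_mono finite_binary_words) auto
  moreover have "card (map flip ` P) = card P"
    using inj_on_subset[OF inj_mapI[OF inj_flip] subset_UNIV] by (rule card_image)
  ultimately show ?thesis
    by (simp add: P_def card_binary_words)
qed

lemma card_le_card_binary_members_add_volume:
  assumes "finite F"
  shows "2 * card F \<le> card {x\<in>F. jokers x = 0} + (\<Sum>x\<in>F. 2 ^ jokers x)"
proof -
  have "2 * card F = (\<Sum>x\<in>F. 2::nat)"
    by simp
  also have "\<dots> \<le> (\<Sum>x\<in>F. of_bool (jokers x = 0) + 2 ^ jokers x)"
  proof (rule sum_mono)
    show "2 \<le> of_bool (jokers x = 0) + (2::nat) ^ jokers x" for x
      by (cases "jokers x") auto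
  qed
  also have "\<dots> = card {x\<in>F. jokers x = 0} + (\<Sum>x\<in>F. 2 ^ jokers x)"
    using assms by (simp add: sum.distrib Int_def)
  finally show ?thesis .
qed

lemma dist_pos_binary_words:
  "x \<in> binary_words n \<Longrightarrow> y \<in> binary_words n \<Longrightarrow> x \<noteq> y \<Longrightarrow> 0 < dist x y"
  unfolding binary_words_def mem_Collect_eq
proof (induction x y arbitrary: n rule: list_induct2')
  case (4 a x b y)
  then show ?case
    by (cases "a = b") (auto simp: clash_def)
qed auto

lemma dist_binary_words_bounds:
  assumes "x \<in> binary_words n" "y \<in> binary_words n" "x \<noteq> y"
  shows "1 \<le> dist x y \<and> dist x y \<le> n"
proof -
  have "length x = n"
    using assms(1) by (simp add: binary_words_def)
  then show ?thesis
    using dist_pos_binary_words[OF assms] dist_le_length[of x y] by simp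
qed

text \<open>Any two of its members agree at position 0 or have a joker at position 1,
  which gives the upper distance bound.\<close>
definition large_family :: "nat \<Rightarrow> sym list set" where
  "large_family m = Cons Zero ` binary_words (Suc m) \<union> (\<lambda>w. One # Joker # w) ` binary_words m"

lemma card_large_family: "card (large_family m) = 3 * 2 ^ m"
proof -
  have "card (large_family m) = card (binary_words (Suc m)) + card (binary_words m)"
    unfolding large_family_def
    by (subst card_Un_disjoint) (auto simp: finite_binary_words card_image inj_on_def)
  then show ?thesis
    by (simp add: card_binary_words)
qed

lemma neighborly_large_family: "neighborly (Suc (Suc m)) (Suc m) (large_family m)"
  unfolding neighborly_def
proof (intro conjI)
  show "large_family m \<subseteq> words (Suc (Suc m))"
    by (auto simp: large_family_def binary_words_def words_def)
next
  define A where "A = Cons Zero ` binary_words (Suc m)"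
  define B where "B = (\<lambda>w. One # Joker # w) ` binary_words m"
  have in_A: "1 \<le> dist x y \<and> dist x y \<le> Suc m" if xy: "x \<in> A" "y \<in> A" and "x \<noteq> y" for x y
  proof -
    obtain u v where "x = Zero # u" "y = Zero # v" "u \<in> binary_words (Suc m)" "v \<in> binary_words (Suc m)"
      using xy by (auto simp: A_def)
    then show ?thesis
      using \<open>x \<noteq> y\<close> dist_binary_words_bounds[of u "Suc m" v] by (auto simp: clash_def)
  qed
  have in_B: "1 \<le> dist x y \<and> dist x y \<le> Suc m" if xy: "x \<in> B" "y \<in> B" and "x \<noteq> y" for x y
  proof -
    obtain u v where "x = One # Joker # u" "y = One # Joker # v" "u \<in> binary_words m" "v \<in> binary_words m"
      using xy by (auto simp: B_def)
    then show ?thesis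
      using \<open>x \<noteq> y\<close> dist_binary_words_bounds[of u m v] by (auto simp: clash_def)
  qed
  have mixed: "1 \<le> dist x y \<and> dist x y \<le> Suc m" if xy: "x \<in> A" "y \<in> B" for x y
  proof -
    obtain u v where "x = Zero # u" "y = One # Joker # v" "u \<in> binary_words (Suc m)"
      using xy by (auto simp: A_def B_def)
    moreover from \<open>u \<in> binary_words (Suc m)\<close> obtain b u' where "u = b # u'" "length u' = m"
      by (cases u) (auto simp: binary_words_def)
    ultimately show ?thesis
      using dist_le_length[of u' v] by (simp add: clash_def)
  qed
  have "large_family m = A \<union> B"
    by (simp add: large_family_def A_def B_def)
  then show "\<forall>x\<in>large_family m. \<forall>y\<in>large_family m. x \<noteq> y \<longrightarrow> 1 \<le> dist x y \<and> dist x y \<le> Suc m"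
    using in_A in_B mixed dist_commute by (metis Un_iff)
qed

theorem proposition3:
  fixes d :: nat and F :: "sym list set"
  assumes "d \<ge> 2"
    and "neighborly d (d - 1) F"
    and "\<forall>G. neighborly d (d - 1) G \<longrightarrow> card G \<le> card F"
  shows "is_partition d F"
proof -
  obtain m where d: "d = Suc (Suc m)"
    using assms(1) by (metis add_2_eq_Suc le_Suc_ex)
  have "finite F"
    using assms(2) finite_subset finite_words by (auto simp: neighborly_def)
  have "card (large_family m) \<le> card F"
    using assms(3) neighborly_large_family[of m] d by simp
  then have "3 * 2 ^ m \<le> card F"
    by (simp add: card_large_family)
  moreover have "2 * card F \<le> card {x\<in>F. jokers x = 0} + (\<Sum>x\<in>F. 2 ^ jokers x)"
    using \<open>finite F\<close> by (rule card_le_card_binary_members_add_volume)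
  moreover have "2 * card {x\<in>F. jokers x = 0} \<le> 2 ^ d"
    using assms(1,2) by (intro card_binary_members_le[of "d - 1"]) auto
  moreover have "(\<Sum>x\<in>F. 2 ^ jokers x) \<le> (2::nat) ^ d"
    using assms(2) by (rule sum_pow_jokers_le)
  ultimately show ?thesis
    unfolding is_partition_def d by simp
qed

end
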